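(* In the setting of the context, let $A=k[d_4]$, and define $$B=k\oplus K\oplus d_2K\oplus d_2^2K\oplus\cdots,\qquad C=k\oplus M\oplus N\oplus d_1N\oplus d_1^2N\oplus d_1^3N\oplus\cdots.$$ These are $kU_3$-submodules of $k[x,y,z]$. Then multiplication in $k[x,y,z]$ induces an isomorphism of $kU_3$-modules $$A\otimes_k B\otimes_k C\xrightarrow{\ \cong\ } k[x,y,z].$$
   Context: Let $k=\mathbb{F}_2$ and let $U_3\cong D_8$ be the group of upper unitriangular $3\times3$ matrices over $\mathbb{F}_2$. The group $U_3$ acts on $k[x,y,z]$ by graded algebra automorphisms, preserving the flag $\langle x\rangle\subset\langle x,y\rangle\subset\langle x,y,z\rangle$. The degree-one part $M=\langle x,y,z\rangle$ is the natural module. The action is generated by the following elements: - $b$, which sends $y\mapsto y+x$ and fixes $x,z$; - $c$, which sends $z\mapsto z+x$ and fixes $x,y$; - $d$, which sends $z\mapsto z+y$ and fixes $x,y$. Put $d_1=x$, $d_2=y^2+xy$ and $d_4=z(z+y)(z+x)(z+y+x)$. Let $N$ be the $kU_3$-submodule of $k[x,y,z]$ generated by $z^2+yz$, and let $K$ be the $kU_3$-submodule generated by $z^2+xz$. Here $k$ denotes the constants (degree $0$). *)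

theory Defs
  imports Complex_Main "HOL-Library.Poly_Mapping" "HOL-Library.Product_Plus" "HOL-Library.Z2"
begin

text \<open>Polynomials in k[x,y,z] over k = F_2: finitely supported maps from exponent
 triples (i,j,l), standing for x^i y^j z^l, to the field bit = F_2.\<close>

type_synonym poly3 = "(nat \<times> nat \<times> nat) \<Rightarrow>\<^sub>0 bit"

definition const3 :: "bit \<Rightarrow> poly3" where
  "const3 c = Poly_Mapping.single (0,0,0) c"

definition scale3 :: "bit \<Rightarrow> poly3 \<Rightarrow> poly3" where
  "scale3 c p = const3 c * p"

abbreviation span3 :: "poly3 set \<Rightarrow> poly3 set" where
  "span3 \<equiv> module.span scale3"

abbreviation independent3 :: "poly3 set \<Rightarrow> bool" where
  "independent3 S \<equiv> \<not> module.dependent scale3 S"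

abbreviation subspace3 :: "poly3 set \<Rightarrow> bool" where
  "subspace3 \<equiv> module.subspace scale3"

definition X :: poly3 where "X = Poly_Mapping.single (1,0,0) 1"
definition Y :: poly3 where "Y = Poly_Mapping.single (0,1,0) 1"
definition Z :: poly3 where "Z = Poly_Mapping.single (0,0,1) 1"

definition subst3 :: "poly3 \<Rightarrow> poly3 \<Rightarrow> poly3 \<Rightarrow> poly3 \<Rightarrow> poly3" where
  "subst3 fx fy fz p =
     (\<Sum>m\<in>Poly_Mapping.keys p. const3 (Poly_Mapping.lookup p m) * fx ^ fst m * fy ^ fst (snd m) * fz ^ snd (snd m))"

definition act_b :: "poly3 \<Rightarrow> poly3" where "act_b = subst3 X (Y + X) Z"
definition act_c :: "poly3 \<Rightarrow> poly3" where "act_c = subst3 X Y (Z + X)"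
definition act_d :: "poly3 \<Rightarrow> poly3" where "act_d = subst3 X Y (Z + Y)"

text \<open>The group U_3 acting on k[x,y,z], generated by b, c, d (each an involution,
 so the generated submonoid is the generated group).\<close>
inductive_set U3 :: "(poly3 \<Rightarrow> poly3) set" where
  U3_id: "id \<in> U3"
| U3_b: "g \<in> U3 \<Longrightarrow> act_b \<circ> g \<in> U3"
| U3_c: "g \<in> U3 \<Longrightarrow> act_c \<circ> g \<in> U3"
| U3_d: "g \<in> U3 \<Longrightarrow> act_d \<circ> g \<in> U3"

definition kU3_submodule :: "poly3 set \<Rightarrow> bool" where
  "kU3_submodule S \<longleftrightarrow> subspace3 S \<and> (\<forall>g\<in>U3. g ` S \<subseteq> S)"

definition kU3_generated :: "poly3 \<Rightarrow> poly3 set" where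
  "kU3_generated f = span3 {g f | g. g \<in> U3}"

definition kconst :: "poly3 set" where "kconst = span3 {1}"
definition Mnat :: "poly3 set" where "Mnat = span3 {X, Y, Z}"

definition d1 :: poly3 where "d1 = X"
definition d2 :: poly3 where "d2 = Y ^ 2 + X * Y"
definition d4 :: poly3 where "d4 = Z * (Z + Y) * (Z + X) * (Z + Y + X)"

definition Nmod :: "poly3 set" where "Nmod = kU3_generated (Z ^ 2 + Y * Z)"
definition Kmod :: "poly3 set" where "Kmod = kU3_generated (Z ^ 2 + X * Z)"

text \<open>A = k[d_4]; B = k + K + d_2 K + d_2^2 K + ...; C = k + M + N + d_1 N + ...
 (internal sums of subspaces of k[x,y,z]; they are direct by degree).\<close>
definition Amod :: "poly3 set" where "Amod = span3 (range (\<lambda>i. d4 ^ i))"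
definition Bmod :: "poly3 set" where
  "Bmod = span3 (kconst \<union> (\<Union>i. (\<lambda>p. d2 ^ i * p) ` Kmod))"
definition Cmod :: "poly3 set" where
  "Cmod = span3 (kconst \<union> Mnat \<union> (\<Union>i. (\<lambda>p. d1 ^ i * p) ` Nmod))"

end

(*
  The generators b, c, d act by algebra automorphisms fixing d_1 = x, d_2 and d_4, and K, N are
  U_3-submodules by construction, so A, B and C are U_3-submodules.

  Computing orbits gives K = <q, d_2> and N = <n, xz, xy, x^2> for q = z^2 + xz and n = z^2 + yz.
  Hence A, B, C have the bases d_4^i, d_2^j q^e and x^k c with e < 2 and c in {1, y, z, n}.
  By the relations q^2 = d_4 + d_2 q, y^2 = d_2 + xy, yz = n + q + xz, z^2 = q + xz,
  yn = qy + d_2 z and zn = qz + qy + xn, the products of these basis elements of degree at most m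
  span all polynomials of degree at most m. There are exactly as many such products as monomials
  of degree at most m, so they form a basis of k[x,y,z]. Products of independent subsets of A, B
  and C are then handled by a dimension count in finite-dimensional subspaces.
*)

theory Submission
  imports Defs
begin

section \<open>k[x,y,z] as a vector space over F_2\<close>

lemma poly3_two: "(2::poly3) = 0"
  by (metis single_numeral bit_2_eq_0 single_zero)

lemma poly3_two_mult [simp]: "2 * (p::poly3) = 0"
  by (simp add: poly3_two)

lemma poly3_add_self [simp]: "(p::poly3) + p = 0"
  by (metis mult_2 poly3_two_mult)

lemma poly3_add_self_left [simp]: "(p::poly3) + (p + q) = q"
  by (metis add.assoc poly3_add_self add_0)

lemma const3_add: "const3 (a + b) = const3 a + const3 b"
  unfolding const3_def by (rule single_add)

lemma const3_mult: "const3 (a * b) = const3 a * const3 b"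
  by (simp add: const3_def mult_single)

lemma zero_exponent: "(0::nat \<times> nat \<times> nat) = (0, 0, 0)"
  by (simp add: zero_prod_def)

lemma const3_0 [simp]: "const3 0 = 0"
  by (simp add: const3_def)

lemma const3_1 [simp]: "const3 1 = 1"
  by (simp add: const3_def zero_exponent[symmetric])

lemma scale3_monomial: "scale3 c (Poly_Mapping.single m 1) = Poly_Mapping.single m c"
  by (simp add: scale3_def const3_def mult_single zero_exponent[symmetric])

interpretation V: vector_space scale3
  by unfold_locales (auto simp: scale3_def const3_add const3_mult algebra_simps)

lemma span3_mult_closed:
  assumes "p \<in> span3 S" and "\<And>s. s \<in> S \<Longrightarrow> c * s \<in> span3 T"
  shows "c * p \<in> span3 T"
  using assms(1)
proof (induction rule: V.span_induct_alt)
  case base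
  then show ?case by (simp add: V.span_zero)
next
  case (step a x y)
  have "c * (scale3 a x + y) = scale3 a (c * x) + c * y"
    by (simp add: scale3_def algebra_simps)
  then show ?case
    using step assms(2) by (simp add: V.span_add V.span_scale)
qed

lemma independent3_if_finite_subsets:
  assumes "\<And>T. T \<subseteq> S \<Longrightarrow> finite T \<Longrightarrow> independent3 T"
  shows "independent3 S"
  using assms unfolding V.dependent_explicit by blast

lemma independent3_if_spanning_card_le:
  assumes "finite B" "independent3 E" "E \<subseteq> span3 B" "card B \<le> card E"
  shows "independent3 B" and "card B = card E"
proof -
  show "card B = card E"
    using V.independent_span_bound[OF assms(1-3)] assms(4) by simp
  show "independent3 B"
  proof
    assume "module.dependent scale3 B"
    then obtain a where a: "a \<in> B" "a \<in> span3 (B - {a})"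
      unfolding V.dependent_def by blast
    then have "B \<subseteq> span3 (B - {a})"
      by (auto intro: V.span_base)
    then have "span3 B \<subseteq> span3 (B - {a})"
      by (rule V.span_minimal[OF _ V.subspace_span])
    then have "E \<subseteq> span3 (B - {a})"
      using assms(3) by (rule subset_trans[rotated])
    then have "card E \<le> card (B - {a})"
      using V.independent_span_bound[OF _ assms(2)] assms(1) by auto
    moreover have "card (B - {a}) < card B"
      using assms(1) a(1) by (rule card_Diff1_less)
    ultimately show False
      using assms(4) by simp
  qed
qed

lemma finite_subset_spanning:
  assumes "finite W" "W \<subseteq> span3 S"
  shows "\<exists>T. T \<subseteq> S \<and> finite T \<and> W \<subseteq> span3 T"
  using assms
proof (induction W rule: finite_induct)
  case empty
  then show ?case by auto
next
  case (insert x W)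
  then obtain T where T: "T \<subseteq> S" "finite T" "W \<subseteq> span3 T"
    by auto
  obtain T' r where T': "finite T'" "T' \<subseteq> S" "x = (\<Sum>a\<in>T'. scale3 (r a) a)"
    using insert.prems unfolding V.span_explicit by blast
  have "x \<in> span3 (T \<union> T')"
    unfolding T'(3) by (intro V.span_sum V.span_scale V.span_base) auto
  moreover have "span3 T \<subseteq> span3 (T \<union> T')"
    by (rule V.span_mono) auto
  ultimately show ?case
    using T T' by (intro exI[of _ "T \<union> T'"]) auto
qed

lemma independent3_extend_within_span:
  assumes "finite S" "independent3 S" "S \<subseteq> span3 E"
  obtains E' B where "E' \<subseteq> E" "finite E'" "S \<subseteq> B" "finite B" "independent3 B"
    "E' \<subseteq> span3 B" "card B \<le> card E'"
proof -
  obtain E' where E': "E' \<subseteq> E" "finite E'" "S \<subseteq> span3 E'"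
    using finite_subset_spanning[OF assms(1,3)] by blast
  obtain B where B: "S \<subseteq> B" "B \<subseteq> S \<union> E'" "independent3 B" "S \<union> E' \<subseteq> span3 B"
    using V.maximal_independent_subset_extend[of S "S \<union> E'"] assms(2) by blast
  have "B \<subseteq> span3 E'"
    using B(2) E'(3) by (auto intro: V.span_base)
  then have "card B \<le> card E'"
    using V.independent_span_bound[OF E'(2) B(3)] by simp
  moreover have "finite B"
    using B(2) assms(1) E'(2) finite_subset by blast
  ultimately show ?thesis
    using that[OF E'(1,2) B(1) _ B(3)] B(4) by blast
qed

section \<open>Substitution homomorphisms\<close>

definition subst3_monomial :: "poly3 \<Rightarrow> poly3 \<Rightarrow> poly3 \<Rightarrow> nat \<times> nat \<times> nat \<Rightarrow> poly3" where
  "subst3_monomial fx fy fz m = fx ^ fst m * fy ^ fst (snd m) * fz ^ snd (snd m)"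

lemma subst3_monomial_add:
  "subst3_monomial fx fy fz (m + n) = subst3_monomial fx fy fz m * subst3_monomial fx fy fz n"
  by (cases m; cases n) (simp add: subst3_monomial_def power_add algebra_simps)

lemma subst3_eq_sum_superset:
  assumes "finite S" "Poly_Mapping.keys p \<subseteq> S"
  shows "subst3 fx fy fz p =
    (\<Sum>m\<in>S. const3 (Poly_Mapping.lookup p m) * subst3_monomial fx fy fz m)"
proof -
  have "subst3 fx fy fz p = (\<Sum>m\<in>Poly_Mapping.keys p.
      const3 (Poly_Mapping.lookup p m) * subst3_monomial fx fy fz m)"
    by (simp add: subst3_def subst3_monomial_def mult.assoc)
  also have "\<dots> = (\<Sum>m\<in>S. const3 (Poly_Mapping.lookup p m) * subst3_monomial fx fy fz m)"
    by (rule sum.mono_neutral_left) (use assms in \<open>auto simp: in_keys_iff\<close>)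
  finally show ?thesis .
qed

lemma subst3_add: "subst3 fx fy fz (p + q) = subst3 fx fy fz p + subst3 fx fy fz q"
proof -
  let ?S = "Poly_Mapping.keys p \<union> Poly_Mapping.keys q"
  have "Poly_Mapping.keys (p + q) \<subseteq> ?S"
    by (rule keys_add)
  then show ?thesis
    by (simp add: subst3_eq_sum_superset[of ?S] lookup_add const3_add distrib_right sum.distrib
        del: add_bit_eq_xor)
qed

lemma subst3_sum: "finite I \<Longrightarrow> subst3 fx fy fz (sum f I) = (\<Sum>i\<in>I. subst3 fx fy fz (f i))"
  by (induction I rule: finite_induct) (auto simp: subst3_add, simp add: subst3_def)

lemma subst3_single:
  "subst3 fx fy fz (Poly_Mapping.single m c) = const3 c * subst3_monomial fx fy fz m"
  by (cases "c = 0") (simp_all add: subst3_def subst3_monomial_def mult.assoc)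

lemma poly3_eq_sum_singles:
  "p = (\<Sum>m\<in>Poly_Mapping.keys p. Poly_Mapping.single m (Poly_Mapping.lookup p m))"
  by (rule poly_mapping_eqI)
     (simp add: lookup_sum lookup_single when_def in_keys_iff sum.delta' split: if_splits)

lemma subst3_mult: "subst3 fx fy fz (p * q) = subst3 fx fy fz p * subst3 fx fy fz q"
proof -
  let ?s = "subst3 fx fy fz" and ?m = "subst3_monomial fx fy fz"
  let ?P = "Poly_Mapping.keys p" and ?Q = "Poly_Mapping.keys q"
  let ?p = "Poly_Mapping.lookup p" and ?q = "Poly_Mapping.lookup q"
  have "p * q = (\<Sum>m\<in>?P. Poly_Mapping.single m (?p m)) * (\<Sum>n\<in>?Q. Poly_Mapping.single n (?q n))"
    using poly3_eq_sum_singles[of p] poly3_eq_sum_singles[of q] by simp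
  also have "\<dots> = (\<Sum>m\<in>?P. \<Sum>n\<in>?Q. Poly_Mapping.single (m + n) (?p m * ?q n))"
    by (simp add: sum_distrib_left sum_distrib_right mult_single del: mult_bit_eq_and)
       (rule sum.swap)
  finally have "?s (p * q) = (\<Sum>m\<in>?P. \<Sum>n\<in>?Q. const3 (?p m * ?q n) * ?m (m + n))"
    by (simp add: subst3_sum subst3_single)
  also have "\<dots> = (\<Sum>m\<in>?P. \<Sum>n\<in>?Q. (const3 (?p m) * ?m m) * (const3 (?q n) * ?m n))"
    by (simp add: const3_mult subst3_monomial_add algebra_simps del: mult_bit_eq_and)
  also have "\<dots> = ?s p * ?s q"
    by (simp add: subst3_def subst3_monomial_def sum_distrib_left sum_distrib_right mult.assoc)
       (rule sum.swap)
  finally show ?thesis .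
qed

lemma subst3_const: "subst3 fx fy fz (const3 c) = const3 c"
  by (simp add: const3_def subst3_single subst3_monomial_def)

lemma subst3_X [simp]: "subst3 fx fy fz X = fx"
  and subst3_Y [simp]: "subst3 fx fy fz Y = fy"
  and subst3_Z [simp]: "subst3 fx fy fz Z = fz"
  by (simp_all add: X_def Y_def Z_def subst3_single subst3_monomial_def)

lemma subst3_power: "subst3 fx fy fz (p ^ n) = subst3 fx fy fz p ^ n"
  by (induction n) (simp_all add: subst3_mult subst3_const[of _ _ _ 1, simplified])

section \<open>The action of U_3\<close>

definition alg_hom3 :: "(poly3 \<Rightarrow> poly3) \<Rightarrow> bool" where
  "alg_hom3 g \<longleftrightarrow> (\<forall>p q. g (p + q) = g p + g q) \<and> (\<forall>p q. g (p * q) = g p * g q)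
     \<and> (\<forall>c. g (const3 c) = const3 c)"

lemma alg_hom3_subst3: "alg_hom3 (subst3 fx fy fz)"
  by (simp add: alg_hom3_def subst3_add subst3_mult subst3_const)

lemma alg_hom3_generators: "h \<in> {act_b, act_c, act_d} \<Longrightarrow> alg_hom3 h"
  by (auto simp: act_b_def act_c_def act_d_def alg_hom3_subst3)

lemma generators_in_U3: "h \<in> {act_b, act_c, act_d} \<Longrightarrow> h \<in> U3"
  using U3.U3_b[OF U3.U3_id] U3.U3_c[OF U3.U3_id] U3.U3_d[OF U3.U3_id] by auto

lemma alg_hom3_U3: "g \<in> U3 \<Longrightarrow> alg_hom3 g"
  by (induction rule: U3.induct)
     (use alg_hom3_generators[of act_b] alg_hom3_generators[of act_c] alg_hom3_generators[of act_d]
       in \<open>simp_all add: alg_hom3_def\<close>)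

lemma U3_comp: "g \<in> U3 \<Longrightarrow> h \<in> U3 \<Longrightarrow> g \<circ> h \<in> U3"
  by (induction rule: U3.induct) (auto simp: comp_assoc intro: U3.intros)

lemma alg_hom3_scale: "alg_hom3 g \<Longrightarrow> g (scale3 c p) = scale3 c (g p)"
  by (simp add: alg_hom3_def scale3_def)

lemma alg_hom3_one: "alg_hom3 g \<Longrightarrow> g 1 = 1"
  unfolding alg_hom3_def by (metis const3_1)

lemma alg_hom3_power: "alg_hom3 g \<Longrightarrow> g (p ^ n) = g p ^ n"
  by (induction n) (simp_all add: alg_hom3_one, simp add: alg_hom3_def)

lemma alg_hom3_image_span:
  assumes "alg_hom3 g" "g ` S \<subseteq> span3 T"
  shows "g ` span3 S \<subseteq> span3 T"
proof -
  have "g p \<in> span3 T" if "p \<in> span3 S" for p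
    using that
  proof (induction rule: V.span_induct_alt)
    case base
    then show ?case using alg_hom3_scale[OF assms(1), of 0 0] by (simp add: V.span_zero)
  next
    case (step c a b)
    have "g (scale3 c a + b) = scale3 c (g a) + g b"
      using assms(1) by (simp add: alg_hom3_def alg_hom3_scale)
    then show ?case using step assms(2) by (auto intro!: V.span_add V.span_scale)
  qed
  then show ?thesis by auto
qed

lemma kU3_submodule_span:
  assumes "\<And>h. h \<in> {act_b, act_c, act_d} \<Longrightarrow> h ` S \<subseteq> span3 S"
  shows "kU3_submodule (span3 S)"
proof -
  have generator: "h ` span3 S \<subseteq> span3 S" if "h \<in> {act_b, act_c, act_d}" for h
    using alg_hom3_image_span[OF alg_hom3_generators[OF that] assms[OF that]] .
  have "g ` span3 S \<subseteq> span3 S" if "g \<in> U3" for g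
    using that
    by (induction rule: U3.induct)
       (use generator in \<open>auto simp: image_comp[symmetric] intro: image_subsetI\<close>)
  then show ?thesis
    by (simp add: kU3_submodule_def)
qed

lemma kU3_submodule_generated: "kU3_submodule (kU3_generated f)"
  unfolding kU3_generated_def
proof (rule kU3_submodule_span)
  fix h :: "poly3 \<Rightarrow> poly3"
  assume "h \<in> {act_b, act_c, act_d}"
  then have "h \<circ> g \<in> U3" if "g \<in> U3" for g
    using U3_comp generators_in_U3 that by blast
  then have "h (g f) \<in> {g f |g. g \<in> U3}" if "g \<in> U3" for g
    using that by (metis (mono_tags, lifting) comp_apply mem_Collect_eq)
  then show "h ` {g f |g. g \<in> U3} \<subseteq> span3 {g f |g. g \<in> U3}"
    by (auto intro: V.span_base)
qed

lemma kU3_submodule_generators_image: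
  "kU3_submodule S \<Longrightarrow> h \<in> {act_b, act_c, act_d} \<Longrightarrow> h ` S \<subseteq> S"
  using generators_in_U3 by (auto simp: kU3_submodule_def)

lemma kU3_generated_base: "g \<in> U3 \<Longrightarrow> g f \<in> kU3_generated f"
  unfolding kU3_generated_def by (auto intro: V.span_base)

lemma kU3_generated_least: "kU3_submodule S \<Longrightarrow> f \<in> S \<Longrightarrow> kU3_generated f \<subseteq> S"
  unfolding kU3_generated_def kU3_submodule_def by (rule V.span_minimal) auto

lemma generators_mult_power_fixed:
  assumes "h \<in> {act_b, act_c, act_d}" "h d = d"
  shows "h (d ^ i * p) = d ^ i * h p"
  using alg_hom3_generators[OF assms(1)] assms(2) by (simp add: alg_hom3_def alg_hom3_power)

section \<open>The modules K, N, A, B and C\<close>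

definition K_gen :: poly3 where "K_gen = Z ^ 2 + X * Z"
definition N_gen :: poly3 where "N_gen = Z ^ 2 + Y * Z"

lemmas act_simps = act_b_def act_c_def act_d_def subst3_add subst3_mult subst3_power

lemma generators_fix_X_d2_d4:
  assumes "h \<in> {act_b, act_c, act_d}"
  shows "h X = X" "h d2 = d2" "h d4 = d4"
  using assms by (auto simp: act_simps d2_def d4_def algebra_simps power2_eq_square)

lemma act_Y: "act_b Y = Y + X" "act_c Y = Y" "act_d Y = Y"
  and act_Z: "act_b Z = Z" "act_c Z = Z + X" "act_d Z = Z + Y"
  by (simp_all add: act_simps)

lemma act_K_gen: "act_b K_gen = K_gen" "act_c K_gen = K_gen" "act_d K_gen = K_gen + d2"
  by (simp_all add: act_simps K_gen_def d2_def algebra_simps power2_eq_square)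

lemma act_N_gen:
  "act_b N_gen = N_gen + X * Z" "act_c N_gen = N_gen + X ^ 2 + X * Y" "act_d N_gen = N_gen"
  "act_b (N_gen + X ^ 2 + X * Y) = N_gen + X * Z + X * Y"
  by (simp_all add: act_simps N_gen_def algebra_simps power2_eq_square)

lemma act_N_gen_terms:
  "act_b (X * Z) = X * Z" "act_c (X * Z) = X * Z + X ^ 2" "act_d (X * Z) = X * Z + X * Y"
  "act_b (X * Y) = X * Y + X ^ 2" "act_c (X * Y) = X * Y" "act_d (X * Y) = X * Y"
  "act_b (X ^ 2) = X ^ 2" "act_c (X ^ 2) = X ^ 2" "act_d (X ^ 2) = X ^ 2"
  by (simp_all add: act_simps algebra_simps power2_eq_square)

lemma span3_add_base: "p \<in> span3 S \<Longrightarrow> q \<in> S \<Longrightarrow> p + q \<in> span3 S"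
  by (rule V.span_add[OF _ V.span_base])

lemma Kmod_eq: "Kmod = span3 {K_gen, d2}"
proof
  have "kU3_submodule (span3 {K_gen, d2})"
    by (rule kU3_submodule_span)
       (auto simp: act_K_gen generators_fix_X_d2_d4 V.span_base intro!: span3_add_base)
  then show "Kmod \<subseteq> span3 {K_gen, d2}"
    unfolding Kmod_def K_gen_def[symmetric] by (rule kU3_generated_least) (simp add: V.span_base)
  have s: "subspace3 Kmod"
    by (simp add: Kmod_def kU3_generated_def)
  have K: "g K_gen \<in> Kmod" if "g \<in> U3" for g
    unfolding Kmod_def K_gen_def[symmetric] using that by (rule kU3_generated_base)
  have "K_gen + act_d K_gen \<in> Kmod"
    using K[OF U3.U3_id] K[OF generators_in_U3] V.subspace_add[OF s] by simp
  then have "d2 \<in> Kmod"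
    by (simp add: act_K_gen)
  with K[OF U3.U3_id] show "span3 {K_gen, d2} \<subseteq> Kmod"
    using s by (intro V.span_minimal) auto
qed

lemma Nmod_eq: "Nmod = span3 {N_gen, X * Z, X * Y, X ^ 2}"
proof
  have "kU3_submodule (span3 {N_gen, X * Z, X * Y, X ^ 2})"
    by (rule kU3_submodule_span)
       (auto simp: act_N_gen act_N_gen_terms V.span_base intro!: span3_add_base)
  then show "Nmod \<subseteq> span3 {N_gen, X * Z, X * Y, X ^ 2}"
    unfolding Nmod_def N_gen_def[symmetric] by (rule kU3_generated_least) (simp add: V.span_base)
  have s: "subspace3 Nmod"
    by (simp add: Nmod_def kU3_generated_def)
  have N: "g N_gen \<in> Nmod" if "g \<in> U3" for g
    unfolding Nmod_def N_gen_def[symmetric] using that by (rule kU3_generated_base)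
  have N0: "N_gen \<in> Nmod" and Nb: "act_b N_gen \<in> Nmod" and Nc: "act_c N_gen \<in> Nmod"
    and Nbc: "act_b (act_c N_gen) \<in> Nmod"
    using N[OF U3.U3_id] N[OF generators_in_U3] N[OF U3.U3_b[OF generators_in_U3[of act_c]]]
    by auto
  have XZ: "X * Z \<in> Nmod"
    using V.subspace_add[OF s N0 Nb] by (simp add: act_N_gen)
  have XY: "X * Y \<in> Nmod"
    using V.subspace_add[OF s Nb Nbc] by (simp add: act_N_gen)
  have XX: "X ^ 2 \<in> Nmod"
    using V.subspace_add[OF s XY V.subspace_add[OF s N0 Nc]] by (simp add: act_N_gen)
  show "span3 {N_gen, X * Z, X * Y, X ^ 2} \<subseteq> Nmod"
    using s N0 XZ XY XX by (intro V.span_minimal) auto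
qed

lemma kU3_submodule_Kmod: "kU3_submodule Kmod"
  and kU3_submodule_Nmod: "kU3_submodule Nmod"
  by (simp_all add: Kmod_def Nmod_def kU3_submodule_generated)

lemma kconst_subset_span: "1 \<in> S \<Longrightarrow> kconst \<subseteq> span3 S"
  unfolding kconst_def by (rule V.span_mono) simp

lemma kU3_submodule_kconst: "kU3_submodule kconst"
  unfolding kconst_def
  by (rule kU3_submodule_span) (auto simp: alg_hom3_one[OF alg_hom3_generators] V.span_base)

lemma kU3_submodule_Mnat: "kU3_submodule Mnat"
  unfolding Mnat_def
  by (rule kU3_submodule_span)
     (auto simp: act_Y act_Z generators_fix_X_d2_d4 V.span_base intro!: span3_add_base)

lemma kU3_submodule_Amod: "kU3_submodule Amod"
  unfolding Amod_def
  by (rule kU3_submodule_span)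
     (auto simp: alg_hom3_power[OF alg_hom3_generators] generators_fix_X_d2_d4 V.span_base)

lemma kU3_submodule_Bmod: "kU3_submodule Bmod"
  unfolding Bmod_def
proof (rule kU3_submodule_span)
  fix h :: "poly3 \<Rightarrow> poly3"
  assume h: "h \<in> {act_b, act_c, act_d}"
  note kconst = kU3_submodule_generators_image[OF kU3_submodule_kconst h]
  note Kmod = kU3_submodule_generators_image[OF kU3_submodule_Kmod h]
  note mult = generators_mult_power_fixed[OF h generators_fix_X_d2_d4(2)[OF h]]
  show "h ` (kconst \<union> (\<Union>i. (\<lambda>p. d2 ^ i * p) ` Kmod))
      \<subseteq> span3 (kconst \<union> (\<Union>i. (\<lambda>p. d2 ^ i * p) ` Kmod))"
    using kconst Kmod by (force simp: mult intro: V.span_base)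
qed

lemma kU3_submodule_Cmod: "kU3_submodule Cmod"
  unfolding Cmod_def
proof (rule kU3_submodule_span)
  fix h :: "poly3 \<Rightarrow> poly3"
  assume h: "h \<in> {act_b, act_c, act_d}"
  note kconst = kU3_submodule_generators_image[OF kU3_submodule_kconst h]
  note Mnat = kU3_submodule_generators_image[OF kU3_submodule_Mnat h]
  note Nmod = kU3_submodule_generators_image[OF kU3_submodule_Nmod h]
  note mult = generators_mult_power_fixed[OF h generators_fix_X_d2_d4(1)[OF h]]
  show "h ` (kconst \<union> Mnat \<union> (\<Union>i. (\<lambda>p. d1 ^ i * p) ` Nmod))
      \<subseteq> span3 (kconst \<union> Mnat \<union> (\<Union>i. (\<lambda>p. d1 ^ i * p) ` Nmod))"
    using kconst Mnat Nmod by (force simp: d1_def mult intro: V.span_base)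
qed

definition basis_A :: "nat \<Rightarrow> poly3" where
  "basis_A i = d4 ^ i"

definition basis_B :: "nat \<times> bool \<Rightarrow> poly3" where
  "basis_B = (\<lambda>(j, e). d2 ^ j * (if e then K_gen else 1))"

definition C_gen :: "bool \<Rightarrow> bool \<Rightarrow> poly3" where
  "C_gen b c = (if b then if c then N_gen else Y else if c then Z else 1)"

definition basis_C :: "nat \<times> bool \<times> bool \<Rightarrow> poly3" where
  "basis_C = (\<lambda>(k, b, c). X ^ k * C_gen b c)"

lemma Amod_eq: "Amod = span3 (range basis_A)"
  by (simp add: Amod_def basis_A_def)

lemma Bmod_subset_span_basis_B: "Bmod \<subseteq> span3 (range basis_B)"
proof -
  have "1 \<in> range basis_B"
    by (rule range_eqI[of _ _ "(0, False)"]) (simp add: basis_B_def)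
  then have "kconst \<subseteq> span3 (range basis_B)"
    by (rule kconst_subset_span)
  moreover have "d2 ^ i * p \<in> span3 (range basis_B)" if "p \<in> Kmod" for i p
    using that unfolding Kmod_eq
  proof (rule span3_mult_closed)
    have "d2 ^ i * K_gen = basis_B (i, True)" "d2 ^ i * d2 = basis_B (Suc i, False)"
      by (simp_all add: basis_B_def power_Suc2)
    then show "d2 ^ i * s \<in> span3 (range basis_B)" if "s \<in> {K_gen, d2}" for s
      using that by (auto intro: V.span_base)
  qed
  ultimately have "kconst \<union> (\<Union>i. (\<lambda>p. d2 ^ i * p) ` Kmod) \<subseteq> span3 (range basis_B)"
    by blast
  then show ?thesis
    unfolding Bmod_def by (rule V.span_minimal[OF _ V.subspace_span])
qed

lemma basis_B_in_Bmod: "basis_B (j, e) \<in> Bmod"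
proof -
  have one: "1 \<in> Bmod"
    unfolding Bmod_def kconst_def by (rule V.span_base) (simp add: V.span_base)
  have mult: "d2 ^ i * p \<in> Bmod" if "p \<in> Kmod" for i p
    using that unfolding Bmod_def by (auto intro: V.span_base)
  have K: "K_gen \<in> Kmod" "d2 \<in> Kmod"
    by (auto simp: Kmod_eq intro: V.span_base)
  show ?thesis
  proof (cases j)
    case 0
    then show ?thesis
      using one mult[OF K(1), of 0] by (simp add: basis_B_def)
  next
    case (Suc i)
    then have "d2 ^ j = d2 ^ i * d2"
      by (simp only: power_Suc2)
    then show ?thesis
      using mult[OF K(1), of j] mult[OF K(2), of i] by (simp add: basis_B_def)
  qed
qed

lemma Bmod_eq: "Bmod = span3 (range basis_B)"
proof (rule antisym[OF Bmod_subset_span_basis_B])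
  have "range basis_B \<subseteq> Bmod"
    using basis_B_in_Bmod by auto
  then show "span3 (range basis_B) \<subseteq> Bmod"
    unfolding Bmod_def by (rule V.span_minimal[OF _ V.subspace_span])
qed

lemma Cmod_subset_span_basis_C: "Cmod \<subseteq> span3 (range basis_C)"
proof -
  let ?E = "range basis_C"
  have E: "basis_C (k, b, c) \<in> span3 ?E" for k b c
    by (rule V.span_base) simp
  have "1 \<in> ?E"
    by (rule range_eqI[of _ _ "(0, False, False)"]) (simp add: basis_C_def C_gen_def)
  then have "kconst \<subseteq> span3 ?E"
    by (rule kconst_subset_span)
  moreover have "{X, Y, Z} \<subseteq> span3 ?E"
    using E[of 1 False False] E[of 0 True False] E[of 0 False True]
    by (simp add: basis_C_def C_gen_def)
  then have "Mnat \<subseteq> span3 ?E"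
    unfolding Mnat_def by (rule V.span_minimal[OF _ V.subspace_span])
  moreover have "d1 ^ i * p \<in> span3 ?E" if "p \<in> Nmod" for i p
    using that unfolding Nmod_eq d1_def
  proof (rule span3_mult_closed)
    have "X ^ i * N_gen = basis_C (i, True, True)" "X ^ i * (X * Z) = basis_C (Suc i, False, True)"
      "X ^ i * (X * Y) = basis_C (Suc i, True, False)" "X ^ i * X ^ 2 = basis_C (i + 2, False, False)"
      by (simp_all add: basis_C_def C_gen_def mult.assoc flip: power_add)
    then show "X ^ i * s \<in> span3 ?E" if "s \<in> {N_gen, X * Z, X * Y, X ^ 2}" for s
      using that E by auto
  qed
  ultimately show ?thesis
    unfolding Cmod_def by (intro V.span_minimal[OF _ V.subspace_span]) blast
qed

lemma basis_C_in_Cmod: "basis_C (k, b, c) \<in> Cmod"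
proof -
  have base: "p \<in> Cmod" if "p \<in> kconst \<union> Mnat" for p
    using that unfolding Cmod_def by (rule V.span_base[OF UnI1])
  have mult: "X ^ i * p \<in> Cmod" if "p \<in> Nmod" for i p
    using that unfolding Cmod_def d1_def by (auto intro: V.span_base)
  have M: "1 \<in> Cmod" "X \<in> Cmod" "Y \<in> Cmod" "Z \<in> Cmod"
    using base by (auto simp: kconst_def Mnat_def intro: V.span_base)
  have N: "N_gen \<in> Nmod" "X * Z \<in> Nmod" "X * Y \<in> Nmod" "X ^ 2 \<in> Nmod"
    by (auto simp: Nmod_eq intro: V.span_base)
  have "X ^ k \<in> Cmod \<and> X ^ k * Y \<in> Cmod \<and> X ^ k * Z \<in> Cmod"
  proof (cases k)
    case 0
    then show ?thesis
      using M by simp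
  next
    case (Suc i)
    have "X ^ k \<in> Cmod"
    proof (cases i)
      case 0
      then show ?thesis
        using Suc M by simp
    next
      case (Suc i')
      then have "X ^ k = X ^ i' * X ^ 2"
        using \<open>k = Suc i\<close> by (simp only: power_add power_Suc2 power2_eq_square mult.assoc)
      then show ?thesis
        using mult[OF N(4)] by simp
    qed
    moreover have "X ^ k * Y = X ^ i * (X * Y)" "X ^ k * Z = X ^ i * (X * Z)"
      using Suc by (simp_all add: mult.assoc)
    ultimately show ?thesis
      using mult[OF N(2)] mult[OF N(3)] by simp
  qed
  then show ?thesis
    using mult[OF N(1)] by (simp add: basis_C_def C_gen_def)
qed

lemma Cmod_eq: "Cmod = span3 (range basis_C)"
proof (rule antisym[OF Cmod_subset_span_basis_C])
  have "range basis_C \<subseteq> Cmod"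
    using basis_C_in_Cmod by auto
  then show "span3 (range basis_C) \<subseteq> Cmod"
    unfolding Cmod_def by (rule V.span_minimal[OF _ V.subspace_span])
qed

definition monomial3 :: "nat \<times> nat \<times> nat \<Rightarrow> poly3" where
  "monomial3 m = Poly_Mapping.single m 1"

definition exp_deg :: "nat \<times> nat \<times> nat \<Rightarrow> nat" where
  "exp_deg m = fst m + fst (snd m) + snd (snd m)"

lemma monomial3_eq: "monomial3 (a, b, c) = X ^ a * Y ^ b * Z ^ c"
proof -
  have "X ^ a = monomial3 (a, 0, 0)"
    by (induction a) (simp_all add: monomial3_def X_def mult_single zero_exponent[symmetric])
  moreover have "Y ^ b = monomial3 (0, b, 0)"
    by (induction b) (simp_all add: monomial3_def Y_def mult_single zero_exponent[symmetric])
  moreover have "Z ^ c = monomial3 (0, 0, c)"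
    by (induction c) (simp_all add: monomial3_def Z_def mult_single zero_exponent[symmetric])
  ultimately show ?thesis
    by (simp add: monomial3_def mult_single)
qed

lemma poly3_eq_sum_monomials:
  "p = (\<Sum>m\<in>Poly_Mapping.keys p. scale3 (Poly_Mapping.lookup p m) (monomial3 m))"
  by (subst poly3_eq_sum_singles) (simp add: monomial3_def scale3_monomial)

lemma monomial3_eq_iff [simp]: "monomial3 m = monomial3 n \<longleftrightarrow> m = n"
  by (metis monomial3_def lookup_single_eq lookup_single_not_eq zero_neq_one)

lemma inj_monomial3: "inj monomial3"
  by (rule injI) simp

lemma independent_monomials: "independent3 (range monomial3)"
  unfolding V.independent_explicit_finite_subsets
proof (intro allI impI ballI)
  fix T u v
  assume T: "T \<subseteq> range monomial3" "finite T" and sum: "(\<Sum>w\<in>T. scale3 (u w) w) = 0"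
    and v: "v \<in> T"
  obtain m where m: "v = monomial3 m"
    using T(1) v by auto
  have "Poly_Mapping.lookup (scale3 (u w) w) m = (if w = v then u v else 0)" if w: "w \<in> T" for w
  proof -
    obtain n where "w = monomial3 n"
      using T(1) w by blast
    moreover have "Poly_Mapping.lookup (scale3 c (monomial3 n)) m = (if n = m then c else 0)" for c
      by (simp add: monomial3_def scale3_monomial lookup_single)
    ultimately show ?thesis
      using m by auto
  qed
  then have "Poly_Mapping.lookup (\<Sum>w\<in>T. scale3 (u w) w) m = u v"
    using T(2) v by (simp add: lookup_sum sum.delta' cong: sum.cong)
  then show "u v = 0"
    using sum by simp
qed

lemma finite_exp_deg_le: "finite {m. exp_deg m \<le> n}"
  by (rule finite_subset[of _ "{..n} \<times> {..n} \<times> {..n}"]) (auto simp: exp_deg_def)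

section \<open>A basis of k[x,y,z] from the bases of A, B and C\<close>

type_synonym idx = "nat \<times> (nat \<times> bool) \<times> (nat \<times> bool \<times> bool)"

definition prod_basis :: "idx \<Rightarrow> poly3" where
  "prod_basis = (\<lambda>(i, jb, kc). basis_A i * basis_B jb * basis_C kc)"

definition idx_deg :: "idx \<Rightarrow> nat" where
  "idx_deg = (\<lambda>(i, (j, e), (k, b, c)). 4 * i + 2 * j + 2 * of_bool e + k + of_bool b + of_bool c)"

definition prod_span :: "nat \<Rightarrow> poly3 set" where
  "prod_span n = span3 (prod_basis ` {t. idx_deg t \<le> n})"

lemma prod_basis_eq:
  "prod_basis (i, (j, e), (k, b, c)) =
     d4 ^ i * (d2 ^ j * (X ^ k * ((if e then K_gen else 1) * C_gen b c)))"
  by (simp add: prod_basis_def basis_A_def basis_B_def basis_C_def algebra_simps)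

lemma prod_basis_in_prod_span: "idx_deg t \<le> n \<Longrightarrow> prod_basis t \<in> prod_span n"
  unfolding prod_span_def by (auto intro: V.span_base)

lemma prod_span_mono: "n \<le> n' \<Longrightarrow> prod_span n \<subseteq> prod_span n'"
  unfolding prod_span_def by (intro V.span_mono image_mono) auto

lemma prod_span_add: "p \<in> prod_span n \<Longrightarrow> q \<in> prod_span n \<Longrightarrow> p + q \<in> prod_span n"
  unfolding prod_span_def by (rule V.span_add)

lemma prod_span_mult_closed:
  assumes "\<And>t. c * prod_basis t \<in> prod_span (idx_deg t + d)" and "p \<in> prod_span n"
  shows "c * p \<in> prod_span (n + d)"
proof -
  have "c * s \<in> prod_span (n + d)" if s: "s \<in> prod_basis ` {t. idx_deg t \<le> n}" for s
  proof -
    obtain t where "s = prod_basis t" "idx_deg t \<le> n"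
      using s by blast
    then show ?thesis
      using assms(1)[of t] prod_span_mono[of "idx_deg t + d" "n + d"] by auto
  qed
  with assms(2) show ?thesis
    unfolding prod_span_def by (rule span3_mult_closed)
qed

lemma prod_span_mult_power:
  assumes "\<And>p n. p \<in> prod_span n \<Longrightarrow> c * p \<in> prod_span (n + d)" and "p \<in> prod_span n"
  shows "c ^ i * p \<in> prod_span (n + i * d)"
proof (induction i)
  case 0
  then show ?case using assms(2) by simp
next
  case (Suc i)
  then have "c * (c ^ i * p) \<in> prod_span (n + i * d + d)"
    by (rule assms(1))
  then show ?case
    by (simp add: mult.assoc add_ac)
qed

lemma K_gen_square: "K_gen * K_gen = d4 + d2 * K_gen"
  by (simp add: K_gen_def d2_def d4_def algebra_simps power2_eq_square)

lemma prod_basis_mult: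
  "d4 * prod_basis (i, jb, kc) = prod_basis (Suc i, jb, kc)"
  "d2 * prod_basis (i, (j, e), kc) = prod_basis (i, (Suc j, e), kc)"
  "X * prod_basis (i, jb, (k, b, c)) = prod_basis (i, jb, (Suc k, b, c))"
  "K_gen * prod_basis (i, (j, False), kc) = prod_basis (i, (j, True), kc)"
  by (simp_all add: prod_basis_def basis_A_def basis_B_def basis_C_def algebra_simps
      split: prod.splits)

lemma K_gen_mult_prod_basis_True:
  "K_gen * prod_basis (i, (j, True), (k, b, c)) =
     prod_basis (Suc i, (j, False), (k, b, c)) + prod_basis (i, (Suc j, True), (k, b, c))"
proof -
  have "K_gen * prod_basis (i, (j, True), (k, b, c)) =
      d4 ^ i * (d2 ^ j * (X ^ k * ((K_gen * K_gen) * C_gen b c)))"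
    by (simp add: prod_basis_eq algebra_simps)
  also have "\<dots> = prod_basis (Suc i, (j, False), (k, b, c)) + prod_basis (i, (Suc j, True), (k, b, c))"
    by (simp add: K_gen_square) (simp add: prod_basis_eq algebra_simps)
  finally show ?thesis .
qed

lemma mult_prod_span:
  assumes "p \<in> prod_span n"
  shows d4_mult_prod_span: "d4 * p \<in> prod_span (n + 4)"
    and d2_mult_prod_span: "d2 * p \<in> prod_span (n + 2)"
    and X_mult_prod_span: "X * p \<in> prod_span (n + 1)"
    and K_gen_mult_prod_span: "K_gen * p \<in> prod_span (n + 2)"
proof -
  have deg: "idx_deg (i, (j, e), (k, b, c)) = 4 * i + 2 * j + 2 * of_bool e + k + of_bool b + of_bool c"
    for i j e k b c
    by (simp add: idx_deg_def)
  show "d4 * p \<in> prod_span (n + 4)" "d2 * p \<in> prod_span (n + 2)" "X * p \<in> prod_span (n + 1)"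
    by (rule prod_span_mult_closed[OF _ assms],
        force simp: prod_basis_mult deg intro: prod_basis_in_prod_span)+
  show "K_gen * p \<in> prod_span (n + 2)"
  proof (rule prod_span_mult_closed[OF _ assms])
    fix t :: idx
    obtain i j e kc where t: "t = (i, (j, e), kc)"
      by (metis prod.exhaust)
    show "K_gen * prod_basis t \<in> prod_span (idx_deg t + 2)"
      by (cases e; cases kc)
         (auto simp: t prod_basis_mult K_gen_mult_prod_basis_True deg
           intro!: prod_span_add prod_basis_in_prod_span)
  qed
qed

lemma Y_mult_C_gen:
  "Y * C_gen False False = prod_basis (0, (0, False), (0, True, False))"
  "Y * C_gen True False = prod_basis (0, (1, False), (0, False, False))
     + prod_basis (0, (0, False), (1, True, False))"
  "Y * C_gen False True = prod_basis (0, (0, False), (0, True, True))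
     + prod_basis (0, (0, True), (0, False, False)) + prod_basis (0, (0, False), (1, False, True))"
  "Y * C_gen True True = prod_basis (0, (0, True), (0, True, False))
     + prod_basis (0, (1, False), (0, False, True))"
  by (simp_all add: prod_basis_eq C_gen_def K_gen_def N_gen_def d2_def algebra_simps power2_eq_square)

lemma Z_mult_C_gen:
  "Z * C_gen False False = prod_basis (0, (0, False), (0, False, True))"
  "Z * C_gen True False = prod_basis (0, (0, False), (0, True, True))
     + prod_basis (0, (0, True), (0, False, False)) + prod_basis (0, (0, False), (1, False, True))"
  "Z * C_gen False True = prod_basis (0, (0, True), (0, False, False))
     + prod_basis (0, (0, False), (1, False, True))"
  "Z * C_gen True True = prod_basis (0, (0, True), (0, False, True))
     + prod_basis (0, (0, True), (0, True, False)) + prod_basis (0, (0, False), (1, True, True))"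
  by (simp_all add: prod_basis_eq C_gen_def K_gen_def N_gen_def d2_def algebra_simps power2_eq_square)

lemma YZ_mult_prod_span:
  assumes "v \<in> {Y, Z}" "p \<in> prod_span n"
  shows "v * p \<in> prod_span (n + 1)"
proof (rule prod_span_mult_closed[OF _ assms(2)])
  fix t :: idx
  obtain i j e k b c where t: "t = (i, (j, e), (k, b, c))"
    by (metis prod.exhaust)
  have "v * C_gen b c \<in> prod_span (of_bool b + of_bool c + 1)"
    using assms(1)
    by (cases b; cases c)
       (auto simp: Y_mult_C_gen Z_mult_C_gen idx_deg_def intro!: prod_span_add prod_basis_in_prod_span)
  moreover note K_gen_mult_prod_span[OF this]
  ultimately have "(if e then K_gen else 1) * (v * C_gen b c)
      \<in> prod_span (of_bool b + of_bool c + 1 + 2 * of_bool e)"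
    by (cases e) simp_all
  then have "d4 ^ i * (d2 ^ j * (X ^ k * ((if e then K_gen else 1) * (v * C_gen b c))))
      \<in> prod_span (of_bool b + of_bool c + 1 + 2 * of_bool e + k * 1 + j * 2 + i * 4)"
    by (intro prod_span_mult_power[OF d4_mult_prod_span] prod_span_mult_power[OF d2_mult_prod_span]
        prod_span_mult_power[OF X_mult_prod_span])
  moreover have "of_bool b + of_bool c + 1 + 2 * of_bool e + k * 1 + j * 2 + i * 4 = idx_deg t + 1"
    by (simp add: t idx_deg_def)
  ultimately show "v * prod_basis t \<in> prod_span (idx_deg t + 1)"
    by (simp add: t prod_basis_eq mult.left_commute)
qed

lemma monomial3_in_prod_span: "monomial3 (a, b, c) \<in> prod_span (a + b + c)"
proof -
  have "1 \<in> prod_span 0"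
    using prod_basis_in_prod_span[of "(0, (0, False), (0, False, False))" 0]
    by (simp add: prod_basis_eq C_gen_def idx_deg_def)
  then have "X ^ a * (Y ^ b * (Z ^ c * 1)) \<in> prod_span (0 + c * 1 + b * 1 + a * 1)"
    by (intro prod_span_mult_power[OF X_mult_prod_span] prod_span_mult_power[OF YZ_mult_prod_span])
       auto
  then show ?thesis
    by (simp add: monomial3_eq mult.assoc add.commute add.left_commute)
qed

lemma span_prod_basis: "span3 (range prod_basis) = UNIV"
proof -
  have "monomial3 m \<in> span3 (range prod_basis)" for m
  proof -
    obtain a b c where m: "m = (a, b, c)"
      by (metis prod.exhaust)
    have "prod_span (a + b + c) \<subseteq> span3 (range prod_basis)"
      unfolding prod_span_def by (intro V.span_mono) auto
    then show ?thesis
      using monomial3_in_prod_span m by auto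
  qed
  then have "p \<in> span3 (range prod_basis)" for p
    by (subst poly3_eq_sum_monomials) (intro V.span_sum V.span_scale)
  then show ?thesis
    by auto
qed

(* Matches the Hilbert series identity (1 + t^2)(1 + t)^2 / ((1 - t^4)(1 - t^2)(1 - t)) = 1/(1 - t)^3. *)
definition idx_exponent :: "idx \<Rightarrow> nat \<times> nat \<times> nat" where
  "idx_exponent = (\<lambda>(i, (j, e), (k, b, c)). (k, 2 * j + of_bool b, 4 * i + 2 * of_bool e + of_bool c))"

lemma exp_deg_idx_exponent: "exp_deg (idx_exponent t) = idx_deg t"
  by (auto simp: exp_deg_def idx_exponent_def idx_deg_def split: prod.splits)

lemma bij_idx_exponent: "bij idx_exponent"
proof (rule o_bij)
  define g :: "nat \<times> nat \<times> nat \<Rightarrow> idx" where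
    "g = (\<lambda>(a, b, c). (c div 4, (b div 2, odd (c div 2)), (a, odd b, odd c)))"
  show "idx_exponent \<circ> g = id"
  proof
    fix m :: "nat \<times> nat \<times> nat"
    obtain a b c where m: "m = (a, b, c)"
      by (metis prod.exhaust)
    have "c div 4 = c div 2 div 2"
      by (simp add: div_mult2_eq[symmetric])
    moreover have "2 * (c div 2 div 2) + c div 2 mod 2 = c div 2" "2 * (c div 2) + c mod 2 = c"
      by simp_all
    ultimately have "4 * (c div 4) + 2 * of_bool (odd (c div 2)) + of_bool (odd c) = c"
      unfolding of_bool_odd_eq_mod_2 by linarith
    then show "(idx_exponent \<circ> g) m = id m"
      by (simp add: m g_def idx_exponent_def of_bool_odd_eq_mod_2)
  qed
  show "g \<circ> idx_exponent = id"
  proof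
    fix t :: idx
    obtain i j e k b c where t: "t = (i, (j, e), (k, b, c))"
      by (metis prod.exhaust)
    show "(g \<circ> idx_exponent) t = id t"
      by (cases e; cases b; cases c) (simp_all add: t g_def idx_exponent_def)
  qed
qed

lemma finite_idx_deg_le: "finite {t. idx_deg t \<le> n}"
  and card_idx_deg_le: "card {t. idx_deg t \<le> n} = card {m. exp_deg m \<le> n}"
proof -
  have "{t. idx_deg t \<le> n} = idx_exponent -` {m. exp_deg m \<le> n}"
    by (simp add: exp_deg_idx_exponent)
  then have "bij_betw idx_exponent {t. idx_deg t \<le> n} {m. exp_deg m \<le> n}"
    using bij_betw_subset[OF bij_idx_exponent subset_UNIV]
      surj_image_vimage_eq[OF bij_is_surj[OF bij_idx_exponent]] by metis
  then show "finite {t. idx_deg t \<le> n}" "card {t. idx_deg t \<le> n} = card {m. exp_deg m \<le> n}"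
    by (simp_all add: bij_betw_finite finite_exp_deg_le bij_betw_same_card)
qed

lemma prod_basis_degree_le_basis:
  shows "independent3 (prod_basis ` {t. idx_deg t \<le> n})"
    and "inj_on prod_basis {t. idx_deg t \<le> n}"
proof -
  let ?T = "{t. idx_deg t \<le> n}" and ?M = "monomial3 ` {m. exp_deg m \<le> n}"
  have "independent3 ?M"
    by (rule V.independent_mono[OF independent_monomials]) auto
  moreover have "?M \<subseteq> prod_span n"
  proof
    fix p
    assume "p \<in> ?M"
    then obtain a b c where "p = monomial3 (a, b, c)" "a + b + c \<le> n"
      by (auto simp: exp_deg_def)
    then show "p \<in> prod_span n"
      using monomial3_in_prod_span prod_span_mono by blast
  qed
  moreover have "card ?M = card ?T"
    using card_image[OF inj_on_subset[OF inj_monomial3 subset_UNIV]] by (simp add: card_idx_deg_le)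
  moreover have "card (prod_basis ` ?T) \<le> card ?T"
    by (rule card_image_le[OF finite_idx_deg_le])
  ultimately have "independent3 (prod_basis ` ?T) \<and> card (prod_basis ` ?T) = card ?T"
    using independent3_if_spanning_card_le[of "prod_basis ` ?T" ?M] finite_idx_deg_le
    unfolding prod_span_def by simp
  then show "independent3 (prod_basis ` ?T)" and "inj_on prod_basis ?T"
    using eq_card_imp_inj_on finite_idx_deg_le by auto
qed

lemma finite_subset_idx_deg_le: "finite U \<Longrightarrow> \<exists>n. U \<subseteq> {t. idx_deg t \<le> n}"
  by (intro exI[of _ "\<Sum>t\<in>U. idx_deg t"]) (auto intro: member_le_sum)

lemma inj_prod_basis: "inj prod_basis"
proof (rule injI)
  fix s t
  assume "prod_basis s = prod_basis t"
  moreover obtain n where "{s, t} \<subseteq> {t. idx_deg t \<le> n}"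
    using finite_subset_idx_deg_le[of "{s, t}"] by auto
  ultimately show "s = t"
    using prod_basis_degree_le_basis(2)[of n] by (auto dest: inj_onD)
qed

lemma independent_prod_basis: "independent3 (range prod_basis)"
proof (rule independent3_if_finite_subsets)
  fix T
  assume "T \<subseteq> range prod_basis" "finite T"
  then obtain U where U: "finite U" "T = prod_basis ` U"
    by (meson finite_subset_image)
  then obtain n where "U \<subseteq> {t. idx_deg t \<le> n}"
    using finite_subset_idx_deg_le by blast
  then have "T \<subseteq> prod_basis ` {t. idx_deg t \<le> n}"
    using U(2) by blast
  then show "independent3 T"
    by (rule V.independent_mono[OF prod_basis_degree_le_basis(1)])
qed

section \<open>Products of independent sets\<close>

definition triple_mult :: "poly3 \<times> poly3 \<times> poly3 \<Rightarrow> poly3" where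
  "triple_mult = (\<lambda>(a, b, c). a * b * c)"

lemma mult_in_span_pair_products:
  assumes "a \<in> span3 S" "b \<in> span3 T"
  shows "a * b \<in> span3 ((\<lambda>(s, t). s * t) ` (S \<times> T))"
proof -
  have "s * b \<in> span3 ((\<lambda>(s, t). s * t) ` (S \<times> T))" if s: "s \<in> S" for s
  proof (rule span3_mult_closed[OF assms(2)])
    fix t
    assume "t \<in> T"
    then have "s * t \<in> (\<lambda>(s, t). s * t) ` (S \<times> T)"
      using s by (auto intro: image_eqI[of _ _ "(s, t)"])
    then show "s * t \<in> span3 ((\<lambda>(s, t). s * t) ` (S \<times> T))"
      by (rule V.span_base)
  qed
  then have "b * a \<in> span3 ((\<lambda>(s, t). s * t) ` (S \<times> T))"
    by (intro span3_mult_closed[OF assms(1)]) (simp add: mult.commute)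
  then show ?thesis
    by (simp add: mult.commute)
qed

lemma mult_in_span_triple_products:
  assumes "a \<in> span3 S1" "b \<in> span3 S2" "c \<in> span3 S3"
  shows "a * b * c \<in> span3 (triple_mult ` (S1 \<times> S2 \<times> S3))"
proof -
  let ?pairs = "\<lambda>S T. (\<lambda>(s, t). s * t) ` (S \<times> T)"
  have "?pairs (?pairs S1 S2) S3 \<subseteq> triple_mult ` (S1 \<times> S2 \<times> S3)"
  proof
    fix x
    assume "x \<in> ?pairs (?pairs S1 S2) S3"
    then obtain s1 s2 s3 where "s1 \<in> S1" "s2 \<in> S2" "s3 \<in> S3" "x = s1 * s2 * s3"
      by auto
    then show "x \<in> triple_mult ` (S1 \<times> S2 \<times> S3)"
      by (auto simp: triple_mult_def intro!: image_eqI[of _ _ "(s1, s2, s3)"])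
  qed
  then show ?thesis
    using mult_in_span_pair_products[OF mult_in_span_pair_products[OF assms(1,2)] assms(3)]
      V.span_mono by blast
qed

(* Extend SA, SB, SC to independent BA, BB, BC spanning finite parts EA', EB', EC' of the bases, with
   card BA <= card EA' etc.; the products from BA x BB x BC then span the independent products from
   EA' x EB' x EC', which are at least as many. *)
lemma triple_products_independent_finite:
  assumes inj: "inj_on triple_mult (EA \<times> EB \<times> EC)"
    and indep: "independent3 (triple_mult ` (EA \<times> EB \<times> EC))"
    and SA: "finite SA" "independent3 SA" "SA \<subseteq> span3 EA"
    and SB: "finite SB" "independent3 SB" "SB \<subseteq> span3 EB"
    and SC: "finite SC" "independent3 SC" "SC \<subseteq> span3 EC"
  shows "inj_on triple_mult (SA \<times> SB \<times> SC) \<and> independent3 (triple_mult ` (SA \<times> SB \<times> SC))"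
proof -
  obtain EA' BA where A: "EA' \<subseteq> EA" "finite EA'" "SA \<subseteq> BA" "finite BA" "independent3 BA"
    "EA' \<subseteq> span3 BA" "card BA \<le> card EA'"
    using independent3_extend_within_span[OF SA] by blast
  obtain EB' BB where B: "EB' \<subseteq> EB" "finite EB'" "SB \<subseteq> BB" "finite BB" "independent3 BB"
    "EB' \<subseteq> span3 BB" "card BB \<le> card EB'"
    using independent3_extend_within_span[OF SB] by blast
  obtain EC' BC where C: "EC' \<subseteq> EC" "finite EC'" "SC \<subseteq> BC" "finite BC" "independent3 BC"
    "EC' \<subseteq> span3 BC" "card BC \<le> card EC'"
    using independent3_extend_within_span[OF SC] by blast
  let ?B = "BA \<times> BB \<times> BC" and ?E = "EA' \<times> EB' \<times> EC'"
  have sub: "?E \<subseteq> EA \<times> EB \<times> EC"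
    using A(1) B(1) C(1) by auto
  have "independent3 (triple_mult ` ?E)"
    using V.independent_mono[OF indep image_mono[OF sub]] .
  moreover have "triple_mult ` ?E \<subseteq> span3 (triple_mult ` ?B)"
  proof
    fix x
    assume "x \<in> triple_mult ` ?E"
    then obtain a b c where "x = a * b * c" "a \<in> EA'" "b \<in> EB'" "c \<in> EC'"
      by (auto simp: triple_mult_def)
    then show "x \<in> span3 (triple_mult ` ?B)"
      using A(6) B(6) C(6) by (auto intro: mult_in_span_triple_products)
  qed
  moreover have card_E: "card (triple_mult ` ?E) = card EA' * (card EB' * card EC')"
    using card_image[OF inj_on_subset[OF inj sub]] by (simp add: card_cartesian_product)
  moreover have card_B: "card (triple_mult ` ?B) \<le> card ?B"
    using A(4) B(4) C(4) by (intro card_image_le) simp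
  moreover have "card ?B \<le> card (triple_mult ` ?E)"
    unfolding card_E card_cartesian_product using A(7) B(7) C(7) by (intro mult_le_mono)
  ultimately have "independent3 (triple_mult ` ?B)" "card (triple_mult ` ?B) = card ?B"
    using independent3_if_spanning_card_le[of "triple_mult ` ?B" "triple_mult ` ?E"] A(4) B(4) C(4)
    by auto
  moreover have "SA \<times> SB \<times> SC \<subseteq> ?B"
    using A(3) B(3) C(3) by auto
  ultimately show ?thesis
    using eq_card_imp_inj_on[of ?B triple_mult] A(4) B(4) C(4)
    by (meson V.independent_mono finite_SigmaI image_mono inj_on_subset)
qed

lemma triple_products_independent:
  assumes inj: "inj_on triple_mult (EA \<times> EB \<times> EC)"
    and indep: "independent3 (triple_mult ` (EA \<times> EB \<times> EC))"
    and SA: "independent3 SA" "SA \<subseteq> span3 EA"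
    and SB: "independent3 SB" "SB \<subseteq> span3 EB"
    and SC: "independent3 SC" "SC \<subseteq> span3 EC"
  shows "inj_on triple_mult (SA \<times> SB \<times> SC)" and "independent3 (triple_mult ` (SA \<times> SB \<times> SC))"
proof -
  have finite_case: "inj_on triple_mult (A \<times> B \<times> C) \<and> independent3 (triple_mult ` (A \<times> B \<times> C))"
    if "finite A" "finite B" "finite C" "A \<subseteq> SA" "B \<subseteq> SB" "C \<subseteq> SC" for A B C
  proof (rule triple_products_independent_finite[OF inj indep])
    show "independent3 A" "independent3 B" "independent3 C"
      using V.independent_mono[OF SA(1) that(4)] V.independent_mono[OF SB(1) that(5)]
        V.independent_mono[OF SC(1) that(6)] .
    show "A \<subseteq> span3 EA" "B \<subseteq> span3 EB" "C \<subseteq> span3 EC"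
      using SA(2) SB(2) SC(2) that(4-6) by auto
  qed (use that in auto)
  show "inj_on triple_mult (SA \<times> SB \<times> SC)"
  proof (rule inj_onI)
    fix x y
    assume xy: "x \<in> SA \<times> SB \<times> SC" "y \<in> SA \<times> SB \<times> SC" "triple_mult x = triple_mult y"
    obtain a b c a' b' c' where x: "x = (a, b, c)" and y: "y = (a', b', c')"
      by (cases x; cases y) auto
    have "inj_on triple_mult ({a, a'} \<times> {b, b'} \<times> {c, c'})"
      using finite_case[of "{a, a'}" "{b, b'}" "{c, c'}"] xy(1,2) x y by auto
    then show "x = y"
      using xy(3) x y by (auto dest: inj_onD)
  qed
  show "independent3 (triple_mult ` (SA \<times> SB \<times> SC))"
  proof (rule independent3_if_finite_subsets)
    fix T
    assume "T \<subseteq> triple_mult ` (SA \<times> SB \<times> SC)" "finite T"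
    then obtain U where U: "U \<subseteq> SA \<times> SB \<times> SC" "T = triple_mult ` U" "finite U"
      by (meson finite_subset_image)
    let ?A = "fst ` U" and ?B = "fst ` snd ` U" and ?C = "snd ` snd ` U"
    have "U \<subseteq> ?A \<times> ?B \<times> ?C"
      by force
    then have "T \<subseteq> triple_mult ` (?A \<times> ?B \<times> ?C)"
      using U(2) by (simp add: image_mono)
    moreover have "?A \<subseteq> SA" "?B \<subseteq> SB" "?C \<subseteq> SC"
      using U(1) by force+
    then have "independent3 (triple_mult ` (?A \<times> ?B \<times> ?C))"
      using finite_case[of ?A ?B ?C] U(3) by blast
    ultimately show "independent3 T"
      by (rule V.independent_mono[rotated])
  qed
qed

lemma triple_mult_bases: "triple_mult (map_prod basis_A (map_prod basis_B basis_C) t) = prod_basis t"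
  by (cases t) (simp add: triple_mult_def prod_basis_def)

lemma bases_product_eq:
  "range basis_A \<times> range basis_B \<times> range basis_C = range (map_prod basis_A (map_prod basis_B basis_C))"
proof -
  have "map_prod basis_B basis_C ` (UNIV \<times> UNIV) = range basis_B \<times> range basis_C"
    by (rule map_prod_surj_on) simp_all
  then have "map_prod basis_A (map_prod basis_B basis_C) ` (UNIV \<times> UNIV \<times> UNIV)
      = range basis_A \<times> range basis_B \<times> range basis_C"
    by (intro map_prod_surj_on) simp_all
  then show ?thesis
    by simp
qed

lemma inj_on_triple_mult_bases: "inj_on triple_mult (range basis_A \<times> range basis_B \<times> range basis_C)"
  unfolding bases_product_eq
  by (rule inj_on_imageI) (simp add: comp_def triple_mult_bases inj_prod_basis)

lemma independent_triple_mult_bases: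
  "independent3 (triple_mult ` (range basis_A \<times> range basis_B \<times> range basis_C))"
  unfolding bases_product_eq image_comp by (simp add: comp_def triple_mult_bases independent_prod_basis)

lemma span_products_of_modules:
  "span3 {a * b * c | a b c. a \<in> Amod \<and> b \<in> Bmod \<and> c \<in> Cmod} = UNIV"
proof -
  have "range prod_basis \<subseteq> {a * b * c | a b c. a \<in> Amod \<and> b \<in> Bmod \<and> c \<in> Cmod}"
  proof
    fix p
    assume "p \<in> range prod_basis"
    then obtain i jb kc where "p = basis_A i * basis_B jb * basis_C kc"
      by (auto simp: prod_basis_def)
    moreover have "basis_A i \<in> Amod" "basis_B jb \<in> Bmod" "basis_C kc \<in> Cmod"
      by (auto simp: Amod_eq Bmod_eq Cmod_eq intro: V.span_base)
    ultimately show "p \<in> {a * b * c | a b c. a \<in> Amod \<and> b \<in> Bmod \<and> c \<in> Cmod}"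
      by blast
  qed
  then show ?thesis
    using V.span_mono span_prod_basis by blast
qed

theorem proposition4p7:
  shows "kU3_submodule Amod \<and> kU3_submodule Bmod \<and> kU3_submodule Cmod
    \<and> (\<forall>g\<in>U3. \<forall>a b c. g (a * b * c) = g a * g b * g c)
    \<and> span3 {a * b * c | a b c. a \<in> Amod \<and> b \<in> Bmod \<and> c \<in> Cmod} = UNIV
    \<and> (\<forall>SA SB SC. SA \<subseteq> Amod \<and> SB \<subseteq> Bmod \<and> SC \<subseteq> Cmod
          \<and> independent3 SA \<and> independent3 SB \<and> independent3 SC \<longrightarrow>
          inj_on (\<lambda>(a, b, c). a * b * c) (SA \<times> SB \<times> SC)
          \<and> independent3 ((\<lambda>(a, b, c). a * b * c) ` (SA \<times> SB \<times> SC)))"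
proof -
  have "\<forall>g\<in>U3. \<forall>a b c. g (a * b * c) = g a * g b * g c"
    using alg_hom3_U3 by (simp add: alg_hom3_def)
  moreover have "inj_on triple_mult (SA \<times> SB \<times> SC) \<and> independent3 (triple_mult ` (SA \<times> SB \<times> SC))"
    if "SA \<subseteq> Amod" "SB \<subseteq> Bmod" "SC \<subseteq> Cmod" "independent3 SA" "independent3 SB" "independent3 SC"
    for SA SB SC
    using triple_products_independent[OF inj_on_triple_mult_bases independent_triple_mult_bases] that
    by (simp add: Amod_eq Bmod_eq Cmod_eq)
  ultimately show ?thesis
    unfolding triple_mult_def[symmetric]
    using kU3_submodule_Amod kU3_submodule_Bmod kU3_submodule_Cmod span_products_of_modules by blast
qed

end
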